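(* Let $\mathbf{A}\in\mathbb{R}^{m\times n}$ be an $s$-regular matrix and $\mathbf{b}\in\mathbb{R}^m$, where $s$ is an integer with $0<s<n$, and let $f(\mathbf{x})=\|\mathbf{A}\mathbf{x}-\mathbf{b}\|^2$. Then the number of BF vectors of the problem (P): minimize $f(\mathbf{x})$ subject to $\|\mathbf{x}\|_0\le s$, is finite.
   Context: $\|\mathbf{x}\|_0$ denotes the number of nonzero components of $\mathbf{x}$ and $C_s=\{\mathbf{x}:\|\mathbf{x}\|_0\le s\}$; $I_1(\mathbf{x})=\{i:x_i\neq 0\}$. A matrix $\mathbf{A}$ is $s$-regular if for every index set $I\subseteq\{1,\dots,n\}$ with $|I|=s$ the columns of $\mathbf{A}$ indexed by $I$ are linearly independent. A vector $\mathbf{x}^*\in C_s$ is a basic feasible (BF) vector of (P) if: when $\|\mathbf{x}^*\|_0<s$, $\nabla f(\mathbf{x}^* )=0$; and when $\|\mathbf{x}^*\|_0=s$, $\nabla_i f(\mathbf{x}^* )=0$ for all $i\in I_1(\mathbf{x}^* )$. *)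

theory Defs
  imports "HOL-Analysis.Analysis"
begin

definition supp_vec :: "real ^ 'n \<Rightarrow> 'n set" where
  "supp_vec x = {i. x $ i \<noteq> 0}"

definition l0norm :: "real ^ 'n \<Rightarrow> nat" where
  "l0norm x = card (supp_vec x)"

definition s_regular :: "nat \<Rightarrow> real ^ 'n ^ 'm \<Rightarrow> bool" where
  "s_regular s A \<longleftrightarrow>
     (\<forall>I :: 'n set. card I = s \<longrightarrow>
        (\<forall>c :: 'n \<Rightarrow> real. (\<Sum>i\<in>I. c i *\<^sub>R column i A) = 0 \<longrightarrow> (\<forall>i\<in>I. c i = 0)))"

text \<open>Basic feasible vector of  min f(x) s.t. ||x||_0 <= s, with the gradient of f
  taken in the sense of GDERIV (Frechet derivative represented by inner product).\<close>
definition BF_vector :: "(real ^ 'n \<Rightarrow> real) \<Rightarrow> nat \<Rightarrow> real ^ 'n \<Rightarrow> bool" where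
  "BF_vector f s x \<longleftrightarrow>
     l0norm x \<le> s \<and>
     (\<exists>g. GDERIV f x :> g \<and>
          (l0norm x < s \<longrightarrow> g = 0) \<and>
          (l0norm x = s \<longrightarrow> (\<forall>i\<in>supp_vec x. g $ i = 0)))"

end

theory Submission
  imports Defs
begin

text \<open>At a BF vector x the gradient 2 A^T (Ax - b) of f vanishes on the support S of x, so
  x solves the normal equations of the least-squares problem restricted to the columns in S.
  Since |S| \<le> s, these columns are linearly independent, and the restricted problem has a unique
  solution. Hence a BF vector is determined by its support, and there are only finitely many
  supports.\<close>

lemma gderiv_norm_residual_square:
  fixes A :: "real ^ 'n ^ 'm" and b :: "real ^ 'm"
  assumes "GDERIV (\<lambda>x. (norm (A *v x - b))\<^sup>2) x :> g"
  shows "g = 2 *\<^sub>R (transpose A *v (A *v x - b))"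
proof -
  define r where "r = A *v x - b"
  define g' where "g' = 2 *\<^sub>R (transpose A *v r)"
  have lin: "bounded_linear (\<lambda>h. A *v h)"
    by (simp add: linear_conv_bounded_linear)
  have residual: "((\<lambda>x. A *v x - b) has_derivative (\<lambda>h. A *v h)) (at x)"
    using has_derivative_diff[OF bounded_linear_imp_has_derivative[OF lin]
        has_derivative_const[of b]]
    by simp
  have square: "((\<lambda>x. (norm (A *v x - b))\<^sup>2) has_derivative
      (\<lambda>h. inner r (A *v h) + inner (A *v h) r)) (at x)"
    unfolding power2_norm_eq_inner r_def by (rule has_derivative_inner[OF residual residual])
  have deriv_eq: "(\<lambda>h. inner h g) = (\<lambda>h. inner r (A *v h) + inner (A *v h) r)"
    using has_derivative_unique[OF assms[unfolded gderiv_def] square] .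
  have "inner h g = inner h g'" for h
  proof -
    have "inner h g = inner r (A *v h) + inner (A *v h) r"
      using deriv_eq by metis
    also have "\<dots> = 2 * inner r (A *v h)"
      by (simp add: inner_commute)
    also have "\<dots> = inner h g'"
      unfolding g'_def by (metis dot_lmul_matrix inner_commute inner_scaleR_right transpose_matrix_vector)
    finally show ?thesis .
  qed
  from this[of "g - g'"] have "inner (g - g') (g - g') = 0"
    by (simp add: inner_diff_right)
  then show ?thesis
    unfolding g'_def r_def by simp
qed

lemma BF_vector_least_squares_normal_equations:
  fixes A :: "real ^ 'n ^ 'm" and b :: "real ^ 'm"
  assumes "BF_vector (\<lambda>x. (norm (A *v x - b))\<^sup>2) s x"
  shows "l0norm x \<le> s" and "\<forall>i\<in>supp_vec x. (transpose A *v (A *v x - b)) $ i = 0"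
proof -
  obtain g where le: "l0norm x \<le> s" and g: "GDERIV (\<lambda>x. (norm (A *v x - b))\<^sup>2) x :> g"
    and "l0norm x < s \<longrightarrow> g = 0" and "l0norm x = s \<longrightarrow> (\<forall>i\<in>supp_vec x. g $ i = 0)"
    using assms unfolding BF_vector_def by blast
  then have "\<forall>i\<in>supp_vec x. g $ i = 0"
    by force
  then show "\<forall>i\<in>supp_vec x. (transpose A *v (A *v x - b)) $ i = 0"
    using gderiv_norm_residual_square[OF g] by simp
  show "l0norm x \<le> s"
    by (fact le)
qed

lemma s_regular_sparse_kernel:
  fixes A :: "real ^ 'n ^ 'm"
  assumes "s_regular s A" and "s \<le> CARD('n)"
    and "l0norm d \<le> s" and "A *v d = 0"
  shows "d = 0"
proof -
  obtain I where supp_I: "supp_vec d \<subseteq> I" and card_I: "card I = s"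
    using exists_subset_between[of "supp_vec d" s UNIV] assms(2,3) by (auto simp: l0norm_def)
  have "(\<Sum>i\<in>I. d $ i *\<^sub>R column i A) = (\<Sum>i\<in>UNIV. d $ i *\<^sub>R column i A)"
    by (rule sum.mono_neutral_left) (use supp_I in \<open>auto simp: supp_vec_def\<close>)
  also have "\<dots> = 0"
    using assms(4) by (simp add: matrix_mult_sum scalar_mult_eq_scaleR)
  finally have "\<forall>i\<in>I. d $ i = 0"
    using assms(1) card_I unfolding s_regular_def by blast
  then show ?thesis
    using supp_I by (auto simp: vec_eq_iff supp_vec_def)
qed

lemma restricted_normal_equations_unique:
  fixes A :: "real ^ 'n ^ 'm" and b :: "real ^ 'm"
  assumes "s_regular s A" and "s \<le> CARD('n)"
    and "supp_vec x = supp_vec y" and "l0norm x \<le> s"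
    and x_normal: "\<forall>i\<in>supp_vec x. (transpose A *v (A *v x - b)) $ i = 0"
    and y_normal: "\<forall>i\<in>supp_vec y. (transpose A *v (A *v y - b)) $ i = 0"
  shows "x = y"
proof -
  define d where "d = x - y"
  have supp_d: "supp_vec d \<subseteq> supp_vec x"
    using assms(3) unfolding d_def supp_vec_def by force
  have normal_d: "(transpose A *v (A *v d)) $ i = 0" if "i \<in> supp_vec x" for i
    using that x_normal y_normal assms(3)
    by (simp add: d_def matrix_vector_mult_diff_distrib)
  \<comment> \<open>d lives on the support, where A^T A d vanishes; hence |A d|^2 = 0.\<close>
  have "inner (A *v d) (A *v d) = inner d (transpose A *v (A *v d))"
    by (metis dot_lmul_matrix transpose_matrix_vector transpose_transpose)
  also have "\<dots> = (\<Sum>i\<in>UNIV. d $ i * (transpose A *v (A *v d)) $ i)"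
    by (simp add: inner_vec_def)
  also have "\<dots> = 0"
    using supp_d normal_d by (intro sum.neutral) (auto simp: supp_vec_def)
  finally have "A *v d = 0"
    by simp
  moreover have "l0norm d \<le> s"
    using supp_d assms(4) card_mono[OF finite supp_d] by (simp add: l0norm_def)
  ultimately have "d = 0"
    using s_regular_sparse_kernel[OF assms(1,2)] by blast
  then show ?thesis
    by (simp add: d_def)
qed

theorem lemma2p1:
  fixes A :: "real ^ 'n ^ 'm" and b :: "real ^ 'm" and s :: nat
  assumes "0 < s" and "s < CARD('n)"
    and "s_regular s A"
  shows "finite {x :: real ^ 'n. BF_vector (\<lambda>x. (norm (A *v x - b))\<^sup>2) s x}"
    (is "finite ?BF")
proof (rule finite_imageD)
  show "finite (supp_vec ` ?BF)"
    by simp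
  show "inj_on supp_vec ?BF"
  proof (rule inj_onI)
    fix x y
    assume "x \<in> ?BF" "y \<in> ?BF" "supp_vec x = supp_vec y"
    then show "x = y"
      using restricted_normal_equations_unique[OF assms(3)] assms(2)
        BF_vector_least_squares_normal_equations by (metis less_imp_le mem_Collect_eq)
  qed
qed

end
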